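(* Let $\mathbf{P}$ be a probability distribution on $\mathbb{R}^D$ whose samples lie in a bounded box $\prod_{d=1}^D[\lambda,\mu]$, and let $U>0$. Fix $0<a<b$ and a latent dimension $K$, and let $\mathcal{C}^\dagger_{\mathbf{P},\frac12 U}$ be the set of Spectrum VAEs $(\phi,\theta)$ (with these $a,b,K$) that are essentially compatible with $\mathbf{P}$ given $\frac12 U$. Define $$\mathrm{MDL}^\dagger_U=\inf_{(\phi,\theta)\in\mathcal{C}^\dagger_{\mathbf{P},\frac12U}}\log_2\Big(\sum_{m=1}^M|\mathcal{P}_m|_{\frac12U}\Big),$$ where, for each $(\phi,\theta)$, $\mathcal{P}_1,\dots,\mathcal{P}_M$ are all the spiking patterns of spectra $\phi(\mathbf{x})$ with $\mathbf{x}$ drawn from $\mathbf{P}$, and $|\mathcal{P}_m|_{\frac12U}$ is the $\frac12U$-complexity of $\mathcal{P}_m$ with respect to $\theta$. Then a Spectrum VAE $(\phi^\dagger,\theta^\dagger)\in\mathcal{C}^\dagger_{\mathbf{P},\frac12U}$ achieves $\mathrm{MDL}^\dagger_U$ (i.e. its value $\log_2(\sum_m|\mathcal{P}_m|_{\frac12U})$ equals $\mathrm{MDL}^\dagger_U$) if and only if the sum of its $U$-residual and its $U$-redundancy is the minimum among all Spectrum VAEs in $\mathcal{C}^\dagger_{\mathbf{P},\frac12U}$.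
   Context: Spectrum VAE: given $0<a<b$, an encoder $\phi:\mathbb{R}^D\to\mathbb{R}^K$ first computes $\mathbf{z}_{\mathrm{pre}}\in\mathbb{R}^K$ and then sets, coordinatewise, $z_k=z_{\mathrm{pre},k}$ if $a\le z_{\mathrm{pre},k}\le b$, $z_k=b$ if $z_{\mathrm{pre},k}>b$, and $z_k=0$ if $z_{\mathrm{pre},k}<a$; the output $\mathbf{z}=\phi(\mathbf{x})$ is called a spectrum. A decoder $\theta:\mathbb{R}^K\to\mathbb{R}^D$ produces $\tilde{\mathbf{x}}=\theta(\mathbf{z})$; distances are Euclidean. The spiking pattern of a spectrum $\mathbf{z}$ is $\{k: z_k\ge a\}$ ($\emptyset$ if $\mathbf{z}=0$). Patterns and robustness: for a pattern $\mathcal{P}=\{k_1,\dots,k_L\}$, a spectrum preserved by $\mathcal{P}$ is any $\mathbf{z}$ with $z_{k_l}\in[a,b]$ and all other coordinates zero. Given $\alpha_{k_l}>0$ and $\epsilon_{k_l}\in[-\alpha_{k_l},\alpha_{k_l}]$, the perturbed spectrum $\tilde{\mathbf{z}}$ has $\tilde z_{k_l}=\min(b,\max(a,z_{k_l}+\epsilon_{k_l}))$, zero elsewhere. $\theta$ is $U'$-robust w.r.t. $\mathcal{P}$ with ($U'$-qualified) boundaries $\{\alpha_{k_l}\}$ if $\|\theta(\mathbf{z})-\theta(\tilde{\mathbf{z}})\|_2\le U'$ for all spectra $\mathbf{z}$ preserved by $\mathcal{P}$ and all such perturbations. For such boundaries, let $Q_{k_l}$ be the smallest integer larger than $(b-a)/(2\alpha_{k_l})$,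 split $[a,b]$ in coordinate $k_l$ into $Q_{k_l}$ equal pieces with midpoints as quantization scales; the representation set consists of the $\prod_l Q_{k_l}$ spectra preserved by $\mathcal{P}$ with quantization-scale coordinates (size $1$ if $\mathcal{P}=\emptyset$). A spectrum preserved by $\mathcal{P}$ is quantized to the element of this set obtained by rounding each $z_{k_l}$ to the nearest scale. The $U'$-optimal representation set $\mathcal{R}^*_{\mathcal{P}}$ is a representation set of minimum size over all $U'$-qualified boundaries, and the $U'$-complexity $|\mathcal{P}|_{U'}$ is its size ($\infty$ if no qualified boundaries exist). Essential compatibility: $(\phi,\theta)$ is essentially compatible with $\mathbf{P}$ given $U'$ if $\|\mathbf{x}-\theta(\phi(\mathbf{x}))\|_2\le U'$ for every sample $\mathbf{x}$ drawn from $\mathbf{P}$. $U$-essence: $\mathcal{E}_{\mathbf{P},U}$ is the minimum cardinality of a finite set $S\subset\mathbb{R}^D$ such that every sample $\mathbf{x}$ of $\mathbf{P}$ is within distance $U$ of some point of $S$. Residual and redundancy: for $(\phi,\theta)\in\mathcal{C}^\dagger_{\mathbf{P},\frac12U}$ with spiking patterns $\mathcal{P}_1,\dots,\mathcal{P}_M$ and $\frac12U$-optimal representation sets $\mathcal{R}^*_{\mathcal{P}_m}$, a quantized spectrum $\hat{\mathbf{z}}\in\mathcal{R}^*_{\mathcal{P}_m}$ is essentially valuable if some sample $\mathbf{x}$ of $\mathbf{P}$ has $\phi(\mathbf{x})$ quantized to $\hat{\mathbf{z}}$; the $\frac12U$-essential complexity $|\mathcal{P}_m|^\dagger_{\frac12U}$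 is the number of essentially valuable elements of $\mathcal{R}^*_{\mathcal{P}_m}$. The $U$-residual is $\sum_m|\mathcal{P}_m|_{\frac12U}-\sum_m|\mathcal{P}_m|^\dagger_{\frac12U}$ and the $U$-redundancy is $\sum_m|\mathcal{P}_m|^\dagger_{\frac12U}-\mathcal{E}_{\mathbf{P},U}$. *)

theory Defs
  imports "HOL-Probability.Probability"
begin

definition spec_clamp :: "real \<Rightarrow> real \<Rightarrow> real \<Rightarrow> real" where
  "spec_clamp a b t = (if t < a then 0 else if t > b then b else t)"

definition spectrum_encoder ::
  "real \<Rightarrow> real \<Rightarrow> (real^'d \<Rightarrow> real^'k) \<Rightarrow> bool" where
  "spectrum_encoder a b \<phi> \<longleftrightarrow>
     (\<exists>zpre :: real^'d \<Rightarrow> real^'k. \<phi> = (\<lambda>x. \<chi> k. spec_clamp a b (zpre x $ k)))"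

definition spiking_pattern :: "real \<Rightarrow> real^'k \<Rightarrow> 'k set" where
  "spiking_pattern a z = {k. z $ k \<ge> a}"

definition preserved_by :: "real \<Rightarrow> real \<Rightarrow> 'k set \<Rightarrow> real^'k \<Rightarrow> bool" where
  "preserved_by a b P z \<longleftrightarrow>
     (\<forall>k\<in>P. a \<le> z $ k \<and> z $ k \<le> b) \<and> (\<forall>k. k \<notin> P \<longrightarrow> z $ k = 0)"

definition perturb :: "real \<Rightarrow> real \<Rightarrow> 'k set \<Rightarrow> real^'k \<Rightarrow> ('k \<Rightarrow> real) \<Rightarrow> real^'k" where
  "perturb a b P z \<epsilon> = (\<chi> k. if k \<in> P then min b (max a (z $ k + \<epsilon> k)) else 0)"

definition robust ::
  "real \<Rightarrow> real \<Rightarrow> (real^'k \<Rightarrow> real^'d) \<Rightarrow> real \<Rightarrow> 'k set \<Rightarrow> ('k \<Rightarrow> real) \<Rightarrow> bool" where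
  "robust a b \<theta> U' P \<alpha> \<longleftrightarrow>
     (\<forall>k\<in>P. \<alpha> k > 0) \<and>
     (\<forall>z \<epsilon>. preserved_by a b P z \<longrightarrow> (\<forall>k\<in>P. \<bar>\<epsilon> k\<bar> \<le> \<alpha> k) \<longrightarrow>
        dist (\<theta> z) (\<theta> (perturb a b P z \<epsilon>)) \<le> U')"

definition num_scales :: "real \<Rightarrow> real \<Rightarrow> real \<Rightarrow> nat" where
  "num_scales a b al = nat (\<lfloor>(b - a) / (2 * al)\<rfloor> + 1)"

text \<open>i-th quantization scale (midpoint of the i-th of Q equal pieces of [a,b]), i < Q.\<close>
definition qscale :: "real \<Rightarrow> real \<Rightarrow> nat \<Rightarrow> nat \<Rightarrow> real" where
  "qscale a b Q i = a + (2 * real i + 1) * (b - a) / (2 * real Q)"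

definition rep_set :: "real \<Rightarrow> real \<Rightarrow> 'k set \<Rightarrow> ('k \<Rightarrow> real) \<Rightarrow> (real^'k) set" where
  "rep_set a b P \<alpha> = {z. preserved_by a b P z \<and>
      (\<forall>k\<in>P. \<exists>i < num_scales a b (\<alpha> k). z $ k = qscale a b (num_scales a b (\<alpha> k)) i)}"

text \<open>Rounding to the nearest scale: index of the piece containing t (ties at piece
  boundaries go to the upper piece; b goes to the last piece).\<close>
definition qindex :: "real \<Rightarrow> real \<Rightarrow> nat \<Rightarrow> real \<Rightarrow> nat" where
  "qindex a b Q t = min (Q - 1) (nat \<lfloor>(t - a) * real Q / (b - a)\<rfloor>)"

definition quantize :: "real \<Rightarrow> real \<Rightarrow> 'k set \<Rightarrow> ('k \<Rightarrow> real) \<Rightarrow> real^'k \<Rightarrow> real^'k" where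
  "quantize a b P \<alpha> z = (\<chi> k. if k \<in> P then
      qscale a b (num_scales a b (\<alpha> k)) (qindex a b (num_scales a b (\<alpha> k)) (z $ k)) else 0)"

text \<open>U'-complexity: minimum size of a representation set over all U'-qualified boundaries;
  infinity if there are none (Inf of the empty set of enat is infinity).\<close>
definition complexity ::
  "real \<Rightarrow> real \<Rightarrow> (real^'k \<Rightarrow> real^'d) \<Rightarrow> real \<Rightarrow> 'k set \<Rightarrow> enat" where
  "complexity a b \<theta> U' P = Inf {enat (card (rep_set a b P \<alpha>)) | \<alpha>. robust a b \<theta> U' P \<alpha>}"

text \<open>A choice of U'-optimal boundaries (meaningful when the complexity is finite).\<close>
definition opt_bound ::
  "real \<Rightarrow> real \<Rightarrow> (real^'k \<Rightarrow> real^'d) \<Rightarrow> real \<Rightarrow> 'k set \<Rightarrow> ('k \<Rightarrow> real)" where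
  "opt_bound a b \<theta> U' P = (SOME \<alpha>. robust a b \<theta> U' P \<alpha> \<and>
       enat (card (rep_set a b P \<alpha>)) = complexity a b \<theta> U' P)"

text \<open>Samples of P: points of the (topological) support of P.\<close>
definition samples :: "(real^'d) measure \<Rightarrow> (real^'d) set" where
  "samples M = {x. \<forall>e>0. emeasure M (ball x e) > 0}"

definition essentially_compatible ::
  "(real^'d) measure \<Rightarrow> real \<Rightarrow> (real^'d \<Rightarrow> real^'k) \<Rightarrow> (real^'k \<Rightarrow> real^'d) \<Rightarrow> bool" where
  "essentially_compatible M U' \<phi> \<theta> \<longleftrightarrow> (\<forall>x\<in>samples M. dist x (\<theta> (\<phi> x)) \<le> U')"

definition compatible_VAEs ::
  "real \<Rightarrow> real \<Rightarrow> (real^'d) measure \<Rightarrow> real \<Rightarrow>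
     ((real^'d \<Rightarrow> real^'k) \<times> (real^'k \<Rightarrow> real^'d)) set" where
  "compatible_VAEs a b M U' = {(\<phi>, \<theta>). spectrum_encoder a b \<phi> \<and> essentially_compatible M U' \<phi> \<theta>}"

definition patterns :: "real \<Rightarrow> (real^'d) measure \<Rightarrow> (real^'d \<Rightarrow> real^'k) \<Rightarrow> 'k set set" where
  "patterns a M \<phi> = spiking_pattern a ` \<phi> ` samples M"

text \<open>U'-essential complexity of pattern P: number of essentially valuable elements of the
  chosen U'-optimal representation set (set to 0 when the complexity is infinite).\<close>
definition essential_complexity ::
  "real \<Rightarrow> real \<Rightarrow> (real^'d) measure \<Rightarrow> (real^'d \<Rightarrow> real^'k) \<Rightarrow> (real^'k \<Rightarrow> real^'d) \<Rightarrow>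
     real \<Rightarrow> 'k set \<Rightarrow> nat" where
  "essential_complexity a b M \<phi> \<theta> U' P =
     (if complexity a b \<theta> U' P = \<infinity> then 0 else
      card {zh \<in> rep_set a b P (opt_bound a b \<theta> U' P).
              \<exists>x\<in>samples M. spiking_pattern a (\<phi> x) = P \<and>
                 quantize a b P (opt_bound a b \<theta> U' P) (\<phi> x) = zh})"

definition essence :: "(real^'d) measure \<Rightarrow> real \<Rightarrow> nat" where
  "essence M U = (LEAST n. \<exists>S. finite S \<and> card S = n \<and> (\<forall>x\<in>samples M. \<exists>s\<in>S. dist x s \<le> U))"

definition total_complexity ::
  "real \<Rightarrow> real \<Rightarrow> (real^'d) measure \<Rightarrow> (real^'d \<Rightarrow> real^'k) \<Rightarrow> (real^'k \<Rightarrow> real^'d) \<Rightarrow> real \<Rightarrow> enat" where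
  "total_complexity a b M \<phi> \<theta> U = (\<Sum>P\<in>patterns a M \<phi>. complexity a b \<theta> (U/2) P)"

definition total_essential_complexity ::
  "real \<Rightarrow> real \<Rightarrow> (real^'d) measure \<Rightarrow> (real^'d \<Rightarrow> real^'k) \<Rightarrow> (real^'k \<Rightarrow> real^'d) \<Rightarrow> real \<Rightarrow> nat" where
  "total_essential_complexity a b M \<phi> \<theta> U =
     (\<Sum>P\<in>patterns a M \<phi>. essential_complexity a b M \<phi> \<theta> (U/2) P)"

definition residual ::
  "real \<Rightarrow> real \<Rightarrow> (real^'d) measure \<Rightarrow> (real^'d \<Rightarrow> real^'k) \<Rightarrow> (real^'k \<Rightarrow> real^'d) \<Rightarrow> real \<Rightarrow> ereal" where
  "residual a b M \<phi> \<theta> U =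
     ereal_of_enat (total_complexity a b M \<phi> \<theta> U) - ereal (real (total_essential_complexity a b M \<phi> \<theta> U))"

definition redundancy ::
  "real \<Rightarrow> real \<Rightarrow> (real^'d) measure \<Rightarrow> (real^'d \<Rightarrow> real^'k) \<Rightarrow> (real^'k \<Rightarrow> real^'d) \<Rightarrow> real \<Rightarrow> ereal" where
  "redundancy a b M \<phi> \<theta> U =
     ereal (real (total_essential_complexity a b M \<phi> \<theta> U) - real (essence M U))"

definition mdl_value ::
  "real \<Rightarrow> real \<Rightarrow> (real^'d) measure \<Rightarrow> (real^'d \<Rightarrow> real^'k) \<Rightarrow> (real^'k \<Rightarrow> real^'d) \<Rightarrow> real \<Rightarrow> ereal" where
  "mdl_value a b M \<phi> \<theta> U =
     (case total_complexity a b M \<phi> \<theta> U of enat n \<Rightarrow> ereal (log 2 (real n)) | \<infinity> \<Rightarrow> \<infinity>)"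

definition MDL_dagger :: "real \<Rightarrow> real \<Rightarrow> (real^'d) measure \<Rightarrow> real \<Rightarrow> ('k::finite) itself \<Rightarrow> ereal" where
  "MDL_dagger a b M U (_ :: 'k itself) =
     (INF p \<in> (compatible_VAEs a b M (U/2) :: ((real^'d \<Rightarrow> real^'k) \<times> _) set).
        mdl_value a b M (fst p) (snd p) U)"

end

theory Submission
  imports Defs
begin

text \<open>Residual plus redundancy telescopes to the total complexity minus the U-essence, which
  does not depend on the VAE. So both criteria order VAEs by their total complexities: log2 is
  increasing on totals that are both 0 or both at least 1 (in Isabelle log 2 0 = 0 = log 2 1),
  and this proviso holds because every pattern has complexity at least 1, so a total is 0
  exactly when P has no samples.\<close>

lemma eq_INF_iff_le_all:
  fixes f :: "'a \<Rightarrow> 'b::complete_lattice"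
  assumes "x \<in> A"
  shows "f x = (INF y\<in>A. f y) \<longleftrightarrow> (\<forall>y\<in>A. f x \<le> f y)"
  using INF_lower[OF assms, of f] by (metis le_INF_iff order_antisym order_refl)

lemma case_enat_log_le_iff:
  fixes m n :: enat
  assumes "m = 0 \<longleftrightarrow> n = 0"
  shows "(case m of enat i \<Rightarrow> ereal (log 2 (real i)) | \<infinity> \<Rightarrow> \<infinity>) \<le>
         (case n of enat i \<Rightarrow> ereal (log 2 (real i)) | \<infinity> \<Rightarrow> \<infinity>) \<longleftrightarrow> m \<le> n"
  using assms by (cases m; cases n) (auto simp: zero_enat_def)

lemma ereal_of_enat_minus_le_iff:
  "ereal_of_enat m - ereal c \<le> ereal_of_enat n - ereal c \<longleftrightarrow> m \<le> n"
  by (cases m; cases n) auto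

lemma finite_rep_set: "finite (rep_set a b P \<alpha>)"
proof -
  define F where "F k = insert 0 (qscale a b (num_scales a b (\<alpha> k)) ` {..<num_scales a b (\<alpha> k)})"
    for k
  have "vec_nth ` rep_set a b P \<alpha> \<subseteq> PiE UNIV F"
    by (auto simp: rep_set_def preserved_by_def F_def) (metis image_eqI lessThan_iff)
  then have "finite (vec_nth ` rep_set a b P \<alpha>)"
    by (rule finite_subset) (simp add: finite_PiE F_def)
  then show ?thesis
    by (rule finite_imageD) (simp add: inj_on_def vec_eq_iff)
qed

lemma qscale_0_bounds:
  assumes "a < b" "Q > 0"
  shows "a \<le> qscale a b Q 0" "qscale a b Q 0 \<le> b"
proof -
  have "0 \<le> (b - a) / (2 * real Q)" "(b - a) / (2 * real Q) \<le> b - a"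
    using assms by (simp_all add: divide_le_eq)
  then show "a \<le> qscale a b Q 0" "qscale a b Q 0 \<le> b"
    by (simp_all add: qscale_def)
qed

lemma rep_set_nonempty:
  fixes P :: "'k::finite set"
  assumes "a < b" "\<forall>k\<in>P. \<alpha> k > 0"
  shows "rep_set a b P \<alpha> \<noteq> {}"
proof -
  have scales_pos: "num_scales a b (\<alpha> k) > 0" if "k \<in> P" for k
    using assms that by (simp add: num_scales_def less_imp_le)
  define z :: "real^'k" where
    "z = (\<chi> k. if k \<in> P then qscale a b (num_scales a b (\<alpha> k)) 0 else 0)"
  have "z \<in> rep_set a b P \<alpha>"
    using scales_pos qscale_0_bounds[OF assms(1)]
    by (auto simp: rep_set_def preserved_by_def z_def)
  then show ?thesis by blast
qed

lemma complexity_ge_1: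
  assumes "a < b"
  shows "complexity a b \<theta> U' P \<ge> 1"
  unfolding complexity_def
proof (rule Inf_greatest, clarify)
  fix \<alpha> assume "robust a b \<theta> U' P \<alpha>"
  then have "rep_set a b P \<alpha> \<noteq> {}"
    using rep_set_nonempty[OF assms, of P \<alpha>] by (simp add: robust_def)
  then show "1 \<le> enat (card (rep_set a b P \<alpha>))"
    using finite_rep_set by (simp add: one_enat_def Suc_le_eq card_gt_0_iff)
qed

lemma total_complexity_eq_0_iff:
  assumes "a < b"
  shows "total_complexity a b M \<phi> \<theta> U = 0 \<longleftrightarrow> samples M = {}"
proof -
  have "complexity a b \<theta> (U/2) P \<noteq> 0" for P
    using complexity_ge_1[OF assms, of \<theta> "U/2" P] by auto
  then have "total_complexity a b M \<phi> \<theta> U = 0 \<longleftrightarrow> patterns a M \<phi> = {}"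
    by (simp add: total_complexity_def)
  then show ?thesis
    by (simp add: patterns_def)
qed

lemma residual_plus_redundancy:
  "residual a b M \<phi> \<theta> U + redundancy a b M \<phi> \<theta> U =
   ereal_of_enat (total_complexity a b M \<phi> \<theta> U) - ereal (real (essence M U))"
  unfolding residual_def redundancy_def
  by (cases "total_complexity a b M \<phi> \<theta> U") auto

lemma mdl_value_le_iff_residual_plus_redundancy_le:
  assumes "a < b"
  shows "mdl_value a b M \<phi>1 \<theta>1 U \<le> mdl_value a b M \<phi>2 \<theta>2 U \<longleftrightarrow>
    residual a b M \<phi>1 \<theta>1 U + redundancy a b M \<phi>1 \<theta>1 U
      \<le> residual a b M \<phi>2 \<theta>2 U + redundancy a b M \<phi>2 \<theta>2 U"
proof -
  have "total_complexity a b M \<phi>1 \<theta>1 U = 0 \<longleftrightarrow> total_complexity a b M \<phi>2 \<theta>2 U = 0"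
    by (simp add: total_complexity_eq_0_iff[OF assms])
  then show ?thesis
    unfolding mdl_value_def residual_plus_redundancy ereal_of_enat_minus_le_iff
    by (rule case_enat_log_le_iff)
qed

theorem theorem2:
  fixes M :: "(real^'d) measure" and U a b lam mu :: real
    and \<phi>d :: "real^'d \<Rightarrow> real^'k" and \<theta>d :: "real^'k \<Rightarrow> real^'d"
  assumes "prob_space M" and "sets M = sets borel"
    and "\<forall>x\<in>samples M. \<forall>d. lam \<le> x $ d \<and> x $ d \<le> mu"
    and "U > 0" and "0 < a" and "a < b"
    and "(\<phi>d, \<theta>d) \<in> compatible_VAEs a b M (U/2)"
  shows "mdl_value a b M \<phi>d \<theta>d U = MDL_dagger a b M U TYPE('k) \<longleftrightarrow>
    (\<forall>(\<phi>, \<theta>) \<in> (compatible_VAEs a b M (U/2) ::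
         ((real^'d \<Rightarrow> real^'k) \<times> (real^'k \<Rightarrow> real^'d)) set).
       residual a b M \<phi>d \<theta>d U + redundancy a b M \<phi>d \<theta>d U
         \<le> residual a b M \<phi> \<theta> U + redundancy a b M \<phi> \<theta> U)"
proof -
  let ?mdl = "\<lambda>p :: (real^'d \<Rightarrow> real^'k) \<times> (real^'k \<Rightarrow> real^'d).
    mdl_value a b M (fst p) (snd p) U"
  have "mdl_value a b M \<phi>d \<theta>d U = MDL_dagger a b M U TYPE('k) \<longleftrightarrow>
      (\<forall>p\<in>compatible_VAEs a b M (U/2). ?mdl (\<phi>d, \<theta>d) \<le> ?mdl p)"
    unfolding MDL_dagger_def using eq_INF_iff_le_all[OF assms(7), of ?mdl] by simp
  then show ?thesis
    by (simp add: split_def mdl_value_le_iff_residual_plus_redundancy_le[OF assms(6)])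
qed

end
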